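(* In the setting described in the context, for every $\chi\in \mathrm{X}(l)$ one has $s_{uu}^*(\chi)=-\sigma(\chi)$, where $\sigma$ denotes the natural Galois action on $\mathrm{X}(l)=H^1(G_l,\mathbb{Q}/\mathbb{Z})$.
   Context: Let $k$ be a perfect field with algebraic closure $\bar k$; for $k\subseteq K\subseteq \bar k$ put $G_K=\operatorname{Gal}(\bar k/K)$. Let $c,d\in k^*$ with the quaternion algebra $(c,d)_k$ not split; let $E=\operatorname{Frac}(k[x,y]/\langle 1-cx^2-dy^2\rangle)$, $l=k(\sqrt d)$, $u=(1+\sqrt d\,y)/x\in El$, so $El=l(u)$. Let $\bar k(u)$ be the rational function field over $\bar k$, on which $G_l$ acts through the coefficients. Fix $\sigma\in G_k$ restricting to the nontrivial automorphism of $l$, and let $s$ be the automorphism of $\bar k(u)$ with $s(a)=\sigma(a)$ for $a\in\bar k$ and $s(u)=c/u$. Identify $\operatorname{Br}(l(u))=H^2(G_l,\bar k(u)^* )$, and let $s^*$ act on it by $(s^*h)(g_1,g_2)=s\big(h(\sigma^{-1}g_1\sigma,\sigma^{-1}g_2\sigma)\big)$ on $2$-cocycles. For $K\supseteq l$ put $\mathrm{X}(K)=H^1(G_K,\mathbb{Q}/\mathbb{Z})$ (trivial action); $\sigma$ acts on $\mathrm{X}(l)$ by $(\sigma\chi)(g)=\chi(\sigma^{-1}g\sigma)$ and on $\operatorname{Br}(l)=H^2(G_l,\bar k^* )$ by $(\sigma h)(g_1,g_2)=\sigma(h(\sigma^{-1}g_1\sigma,\sigma^{-1}g_2\sigma))$.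 Let $p$ range over monic irreducible polynomials in $l[u]$ other than $u$; fix a root $a_p\in\bar k$ of each, and let $\tilde p$ be the monic irreducible polynomial in $l[u]$ whose roots are $c/\sigma(a)$, $a$ running over the roots of $p$. Let $B(p)\subset\bar k(u)^*$ be the subgroup generated by the $u-a$, $p(a)=0$. As $G_l$-modules $\bar k(u)^*=\bar k^*\times\langle u\rangle\times\coprod_p B(p)$, giving $H^2(G_l,\bar k(u)^* )=H^2(G_l,\bar k^* )\oplus H^2(G_l,\langle u\rangle)\oplus\bigoplus_p H^2(G_l,B(p))$. Identify $H^2(G_l,\bar k^* )=\operatorname{Br}(l)$; identify $\mathrm{X}(l)$ with $H^2(G_l,\langle u\rangle)$ via $\pi^*\circ\delta$, where $\delta\colon H^1(G_l,\mathbb{Q}/\mathbb{Z})\to H^2(G_l,\mathbb{Z})$ is the connecting map of $0\to\mathbb{Z}\to\mathbb{Q}\to\mathbb{Q}/\mathbb{Z}\to0$ and $\pi(e)=u^e$; identify $\mathrm{X}(l(a_p))$ with $H^2(G_l,B(p))$ via $\iota^*\circ sh\circ\delta$, where $H=G_{l(a_p)}$, $\delta\colon H^1(H,\mathbb{Q}/\mathbb{Z})\to H^2(H,\mathbb{Z})$, $sh\colon H^2(H,\mathbb{Z})\to H^2(G_l,A)$ is the Shapiro isomorphism with $A=\{x\colon G_l\to\mathbb{Z} : x(hg)=x(g)\ \forall h\in H\}$, $(gx)(g_1)=x(g_1g)$, and $\iota\colon A\to B(p)$, $\iota(x)=\prod_{\tau H\in G_l/H}(u-\tau(a_p))^{x(\tau^{-1})}$.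 This gives $\operatorname{Br}(l(u))\cong\operatorname{Br}(l)\oplus\mathrm{X}(l)\oplus\bigoplus_p\mathrm{X}(l(a_p))$. In it $s^*$ is triangular: $s^*$ maps $\operatorname{Br}(l)$ to itself, $\mathrm{X}(l)$ into $\operatorname{Br}(l)\oplus\mathrm{X}(l)$, and $\mathrm{X}(l(a_p))$ into $\operatorname{Br}(l)\oplus\mathrm{X}(l)\oplus\mathrm{X}(l(a_{\tilde p}))$. Write $s_{uu}^*\colon\mathrm{X}(l)\to\mathrm{X}(l)$ for the $\mathrm{X}(l)$-component of $s^*$ restricted to $\mathrm{X}(l)$ (concretely, the map on $H^2(G_l,\langle u\rangle)$ given by $f\mapsto s_{uu}(f(\sigma^{-1}g_1\sigma,\sigma^{-1}g_2\sigma))$ with $s_{uu}(u^e)=u^{-e}$). *)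

theory Defs
  imports "HOL-Algebra.Algebraic_Closure" "HOL-Algebra.Generated_Fields" Complex_Main
begin

text \<open>Perfect subfield k of the ambient field K: char 0, or char p and x \<mapsto> x^p surjective on k.\<close>
definition perfect_subfield :: "('a, 'b) ring_scheme \<Rightarrow> 'a set \<Rightarrow> bool" where
  "perfect_subfield K k \<longleftrightarrow>
     ((\<exists>n::nat. 0 < n \<and> add_pow K n \<one>\<^bsub>K\<^esub> = \<zero>\<^bsub>K\<^esub>) \<longrightarrow>
        (let p = (LEAST n::nat. 0 < n \<and> add_pow K n \<one>\<^bsub>K\<^esub> = \<zero>\<^bsub>K\<^esub>)
         in \<forall>x\<in>k. \<exists>y\<in>k. y [^]\<^bsub>K\<^esub> p = x))"

text \<open>Quaternion algebra (c,d)_k with basis 1,i,j,ij, i^2=c, j^2=d, ij=-ji; elements are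
  4-tuples of coefficients in k.  It is split iff it is not a division algebra,
  i.e. iff it has zero divisors.\<close>
definition quat_mul :: "('a, 'b) ring_scheme \<Rightarrow> 'a \<Rightarrow> 'a \<Rightarrow> 'a \<times> 'a \<times> 'a \<times> 'a
   \<Rightarrow> 'a \<times> 'a \<times> 'a \<times> 'a \<Rightarrow> 'a \<times> 'a \<times> 'a \<times> 'a" where
  "quat_mul K c d = (\<lambda>(a0,a1,a2,a3) (b0,b1,b2,b3).
     (a0 \<otimes>\<^bsub>K\<^esub> b0 \<oplus>\<^bsub>K\<^esub> c \<otimes>\<^bsub>K\<^esub> a1 \<otimes>\<^bsub>K\<^esub> b1 \<oplus>\<^bsub>K\<^esub> d \<otimes>\<^bsub>K\<^esub> a2 \<otimes>\<^bsub>K\<^esub> b2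
        \<ominus>\<^bsub>K\<^esub> c \<otimes>\<^bsub>K\<^esub> d \<otimes>\<^bsub>K\<^esub> a3 \<otimes>\<^bsub>K\<^esub> b3,
      a0 \<otimes>\<^bsub>K\<^esub> b1 \<oplus>\<^bsub>K\<^esub> a1 \<otimes>\<^bsub>K\<^esub> b0 \<ominus>\<^bsub>K\<^esub> d \<otimes>\<^bsub>K\<^esub> a2 \<otimes>\<^bsub>K\<^esub> b3
        \<oplus>\<^bsub>K\<^esub> d \<otimes>\<^bsub>K\<^esub> a3 \<otimes>\<^bsub>K\<^esub> b2,
      a0 \<otimes>\<^bsub>K\<^esub> b2 \<oplus>\<^bsub>K\<^esub> a2 \<otimes>\<^bsub>K\<^esub> b0 \<oplus>\<^bsub>K\<^esub> c \<otimes>\<^bsub>K\<^esub> a1 \<otimes>\<^bsub>K\<^esub> b3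
        \<ominus>\<^bsub>K\<^esub> c \<otimes>\<^bsub>K\<^esub> a3 \<otimes>\<^bsub>K\<^esub> b1,
      a0 \<otimes>\<^bsub>K\<^esub> b3 \<oplus>\<^bsub>K\<^esub> a3 \<otimes>\<^bsub>K\<^esub> b0 \<oplus>\<^bsub>K\<^esub> a1 \<otimes>\<^bsub>K\<^esub> b2
        \<ominus>\<^bsub>K\<^esub> a2 \<otimes>\<^bsub>K\<^esub> b1))"

definition quat_split :: "('a, 'b) ring_scheme \<Rightarrow> 'a set \<Rightarrow> 'a \<Rightarrow> 'a \<Rightarrow> bool" where
  "quat_split K k c d \<longleftrightarrow>
     (\<exists>x\<in>k \<times> k \<times> k \<times> k. \<exists>y\<in>k \<times> k \<times> k \<times> k.
        x \<noteq> (\<zero>\<^bsub>K\<^esub>, \<zero>\<^bsub>K\<^esub>, \<zero>\<^bsub>K\<^esub>, \<zero>\<^bsub>K\<^esub>) \<and> y \<noteq> (\<zero>\<^bsub>K\<^esub>, \<zero>\<^bsub>K\<^esub>, \<zero>\<^bsub>K\<^esub>, \<zero>\<^bsub>K\<^esub>) \<and>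
        quat_mul K c d x y = (\<zero>\<^bsub>K\<^esub>, \<zero>\<^bsub>K\<^esub>, \<zero>\<^bsub>K\<^esub>, \<zero>\<^bsub>K\<^esub>))"

text \<open>G_F = Gal(K/F): automorphisms of K (K = algebraic closure) fixing F pointwise,
  normalised to be extensional on the carrier.\<close>
definition Gal :: "('a, 'b) ring_scheme \<Rightarrow> 'a set \<Rightarrow> ('a \<Rightarrow> 'a) set" where
  "Gal K F = {g. g \<in> ring_iso K K \<and> g \<in> extensional (carrier K) \<and> (\<forall>x\<in>F. g x = x)}"

definition gmul :: "('a, 'b) ring_scheme \<Rightarrow> ('a \<Rightarrow> 'a) \<Rightarrow> ('a \<Rightarrow> 'a) \<Rightarrow> ('a \<Rightarrow> 'a)" where
  "gmul K g h = compose (carrier K) g h"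

definition ginv :: "('a, 'b) ring_scheme \<Rightarrow> ('a \<Rightarrow> 'a) \<Rightarrow> ('a \<Rightarrow> 'a)" where
  "ginv K g = restrict (inv_into (carrier K) g) (carrier K)"

definition conj :: "('a, 'b) ring_scheme \<Rightarrow> ('a \<Rightarrow> 'a) \<Rightarrow> ('a \<Rightarrow> 'a) \<Rightarrow> ('a \<Rightarrow> 'a)" where
  "conj K \<sigma> g = gmul K (ginv K \<sigma>) (gmul K g \<sigma>)"

text \<open>A function on G (resp. G\<times>G) with discrete values is continuous for the Krull
  topology iff it is locally constant, i.e. depends only on the restriction of the
  arguments to some finite set of elements of K.\<close>
definition cont1 :: "('a, 'b) ring_scheme \<Rightarrow> ('a \<Rightarrow> 'a) set \<Rightarrow> (('a \<Rightarrow> 'a) \<Rightarrow> 'c) \<Rightarrow> bool" where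
  "cont1 K G f \<longleftrightarrow> (\<exists>S. finite S \<and> S \<subseteq> carrier K \<and>
      (\<forall>g\<in>G. \<forall>g'\<in>G. (\<forall>x\<in>S. g x = g' x) \<longrightarrow> f g = f g'))"

definition cont2 :: "('a, 'b) ring_scheme \<Rightarrow> ('a \<Rightarrow> 'a) set
    \<Rightarrow> (('a \<Rightarrow> 'a) \<Rightarrow> ('a \<Rightarrow> 'a) \<Rightarrow> 'c) \<Rightarrow> bool" where
  "cont2 K G f \<longleftrightarrow> (\<exists>S. finite S \<and> S \<subseteq> carrier K \<and>
      (\<forall>g1\<in>G. \<forall>g2\<in>G. \<forall>h1\<in>G. \<forall>h2\<in>G.
         (\<forall>x\<in>S. g1 x = h1 x \<and> g2 x = h2 x) \<longrightarrow> f g1 g2 = f h1 h2))"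

text \<open>Elements of Q/Z are represented by their unique representative in [0,1).
  A character is a continuous homomorphism G \<rightarrow> Q/Z.\<close>
definition character :: "('a, 'b) ring_scheme \<Rightarrow> ('a \<Rightarrow> 'a) set \<Rightarrow> (('a \<Rightarrow> 'a) \<Rightarrow> rat) \<Rightarrow> bool" where
  "character K G \<chi> \<longleftrightarrow> (\<forall>g\<in>G. 0 \<le> \<chi> g \<and> \<chi> g < 1) \<and>
     (\<forall>g\<in>G. \<forall>h\<in>G. \<chi> (gmul K g h) = frac (\<chi> g + \<chi> h)) \<and> cont1 K G \<chi>"

definition char_act :: "('a, 'b) ring_scheme \<Rightarrow> ('a \<Rightarrow> 'a) \<Rightarrow> (('a \<Rightarrow> 'a) \<Rightarrow> rat) \<Rightarrow> (('a \<Rightarrow> 'a) \<Rightarrow> rat)" where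
  "char_act K \<sigma> \<chi> = (\<lambda>g. \<chi> (conj K \<sigma> g))"

definition char_neg :: "(('a \<Rightarrow> 'a) \<Rightarrow> rat) \<Rightarrow> (('a \<Rightarrow> 'a) \<Rightarrow> rat)" where
  "char_neg \<chi> = (\<lambda>g. frac (- \<chi> g))"

text \<open>\<delta>: H^1(G,Q/Z) \<rightarrow> H^2(G,Z): coboundary of the lift of \<chi> to Q with values in [0,1)
  (trivial action); the value is an integer.  Composed with \<pi>(e) = u^e, a 2-cocycle with
  values in \<langle>u\<rangle> is recorded by its exponents.\<close>
definition delta :: "('a, 'b) ring_scheme \<Rightarrow> (('a \<Rightarrow> 'a) \<Rightarrow> rat) \<Rightarrow> ('a \<Rightarrow> 'a) \<Rightarrow> ('a \<Rightarrow> 'a) \<Rightarrow> int" where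
  "delta K \<chi> g1 g2 = \<lfloor>\<chi> g2 - \<chi> (gmul K g1 g2) + \<chi> g1\<rfloor>"

definition cohomologous2 :: "('a, 'b) ring_scheme \<Rightarrow> ('a \<Rightarrow> 'a) set
   \<Rightarrow> (('a \<Rightarrow> 'a) \<Rightarrow> ('a \<Rightarrow> 'a) \<Rightarrow> int) \<Rightarrow> (('a \<Rightarrow> 'a) \<Rightarrow> ('a \<Rightarrow> 'a) \<Rightarrow> int) \<Rightarrow> bool" where
  "cohomologous2 K G f f' \<longleftrightarrow> (\<exists>b :: ('a \<Rightarrow> 'a) \<Rightarrow> int. cont1 K G b \<and>
     (\<forall>g1\<in>G. \<forall>g2\<in>G. f g1 g2 - f' g1 g2 = b g2 - b (gmul K g1 g2) + b g1))"

text \<open>s_uu^*: f \<mapsto> s_uu(f(\<sigma>^{-1}g1\<sigma>, \<sigma>^{-1}g2\<sigma>)) with s_uu(u^e) = u^{-e}; on exponents,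
  negation.\<close>
definition s_uu_star :: "('a, 'b) ring_scheme \<Rightarrow> ('a \<Rightarrow> 'a)
   \<Rightarrow> (('a \<Rightarrow> 'a) \<Rightarrow> ('a \<Rightarrow> 'a) \<Rightarrow> int) \<Rightarrow> (('a \<Rightarrow> 'a) \<Rightarrow> ('a \<Rightarrow> 'a) \<Rightarrow> int)" where
  "s_uu_star K \<sigma> f = (\<lambda>g1 g2. - f (conj K \<sigma> g1) (conj K \<sigma> g2))"

end

(*
  Since \<sigma>(\<surd>d) = -\<surd>d, this conjugation maps G_l to itself and is multiplicative, so
  \<sigma>\<chi> is again a character and s_uu^*(\<delta>\<chi>) = -\<delta>(\<sigma>\<chi>).  Finally \<delta>(-\<psi>) and -\<delta>\<psi>
  differ by the coboundary of the integer cochain \<lfloor>-\<psi>\<rfloor>, because -\<psi> is lifted to [0,1)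
  by frac rather than by plain negation.
*)
theory Submission
  imports Defs
begin

lemma floor_frac_neg_coboundary:
  fixes a b c :: "'a::floor_ceiling"
  assumes "b - c + a \<in> \<int>"
  shows "- \<lfloor>b - c + a\<rfloor> - \<lfloor>frac (- b) - frac (- c) + frac (- a)\<rfloor>
     = \<lfloor>- b\<rfloor> - \<lfloor>- c\<rfloor> + \<lfloor>- a\<rfloor>"
proof -
  obtain n where n: "b - c + a = of_int n" using assms Ints_cases by blast
  have "frac (- b) - frac (- c) + frac (- a) = of_int (- n - \<lfloor>- b\<rfloor> + \<lfloor>- c\<rfloor> - \<lfloor>- a\<rfloor>)"
    using n by (simp add: frac_def algebra_simps)
  then show ?thesis using n by simp
qed

lemma (in domain) square_eq_squareD:
  assumes "a \<in> carrier R" "b \<in> carrier R" "a \<otimes> a = b \<otimes> b"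
  shows "a = b \<or> a = \<ominus> b"
proof -
  have "(a \<ominus> b) \<otimes> (a \<oplus> b) = a \<otimes> a \<ominus> b \<otimes> b"
    using assms(1,2) by algebra
  also have "\<dots> = \<zero>" using assms by algebra
  finally have "a \<ominus> b = \<zero> \<or> a \<oplus> b = \<zero>"
    using assms(1,2) by (intro integral) auto
  then show ?thesis
    using assms(1,2) by (metis minus_equality r_right_minus_eq)
qed

lemma (in field) ring_hom_fixes_generate_field:
  assumes hom: "\<phi> \<in> ring_hom R R" and H: "H \<subseteq> carrier R" and fixed: "\<forall>h\<in>H. \<phi> h = h"
    and x: "x \<in> generate_field R H"
  shows "\<phi> x = x"
  using x
proof (induction rule: generate_field.induct)
  case one
  show ?case using hom by (rule ring_hom_one)
next
  case (incl h)
  then show ?case using fixed by blast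
next
  case (a_inv h)
  interpret ring_hom_cring R R \<phi>
    using hom by (simp add: ring_hom_cringI is_cring)
  show ?case using generate_field_in_carrier[OF H a_inv(1)] a_inv(2) by simp
next
  case (m_inv h)
  have h: "h \<in> carrier R" "h \<noteq> \<zero>" using generate_field_in_carrier[OF H m_inv(1)] m_inv(2) .
  then have inv_h: "inv h \<in> carrier R" "inv h \<otimes> h = \<one>" by (simp_all add: field_Units)
  then have "\<phi> (inv h) \<otimes> h = \<one>"
    using ring_hom_mult[OF hom inv_h(1) h(1)] m_inv(3) ring_hom_one[OF hom] by simp
  then show ?case using h ring_hom_closed[OF hom inv_h(1)] by (metis comm_inv_char m_comm)
next
  case (eng_add h1 h2)
  then show ?case using generate_field_in_carrier[OF H] ring_hom_add[OF hom] by simp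
next
  case (eng_mult h1 h2)
  then show ?case using generate_field_in_carrier[OF H] ring_hom_mult[OF hom] by simp
qed

lemma (in field) Gal_generate_field:
  assumes "H \<subseteq> carrier R"
  shows "Gal R (generate_field R H) = Gal R H"
proof
  show "Gal R (generate_field R H) \<subseteq> Gal R H"
    unfolding Gal_def by (auto intro: generate_field.incl)
  show "Gal R H \<subseteq> Gal R (generate_field R H)"
    unfolding Gal_def ring_iso_def using ring_hom_fixes_generate_field[OF _ assms] by auto
qed

lemma Gal_funcset: "g \<in> Gal K F \<Longrightarrow> g \<in> carrier K \<rightarrow> carrier K"
  unfolding Gal_def by (auto intro: ring_iso_memE(1))

lemma conj_apply: "x \<in> carrier K \<Longrightarrow> conj K \<sigma> g x = ginv K \<sigma> (g (\<sigma> x))"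
  by (simp add: conj_def gmul_def compose_def)

lemma ginv_apply:
  assumes "\<sigma> \<in> ring_iso K K"
  shows "x \<in> carrier K \<Longrightarrow> ginv K \<sigma> (\<sigma> x) = x"
    and "y \<in> carrier K \<Longrightarrow> \<sigma> (ginv K \<sigma> y) = y"
    and "y \<in> carrier K \<Longrightarrow> ginv K \<sigma> y \<in> carrier K"
  using ring_iso_memE(5)[OF assms]
  by (auto simp: ginv_def bij_betw_def inv_into_into f_inv_into_f inv_into_f_f ring_iso_memE(1)[OF assms])

lemma conj_in_Gal:
  assumes K: "ring K" and \<sigma>: "\<sigma> \<in> ring_iso K K" and g: "g \<in> Gal K F"
    and F0: "F0 \<subseteq> carrier K" "\<sigma> ` F0 \<subseteq> F"
  shows "conj K \<sigma> g \<in> Gal K F0"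
proof -
  have "inv_into (carrier K) \<sigma> \<circ> (g \<circ> \<sigma>) \<in> ring_iso K K"
    using g ring_iso_set_sym[OF K \<sigma>] ring_iso_set_trans[OF ring_iso_set_trans[OF \<sigma>]]
    unfolding Gal_def by blast
  then have iso: "conj K \<sigma> g \<in> ring_iso K K"
    by (rule ring.ring_iso_restrict[OF K])
       (use Gal_funcset[OF g] ring_iso_memE(1)[OF \<sigma>] in \<open>auto simp: conj_apply ginv_def\<close>)
  have "conj K \<sigma> g x = x" if x: "x \<in> F0" for x
  proof -
    have "g (\<sigma> x) = \<sigma> x" using x F0(2) g unfolding Gal_def by auto
    then show ?thesis using x F0(1) ginv_apply(1)[OF \<sigma>] by (auto simp: conj_apply)
  qed
  then show ?thesis using iso unfolding Gal_def conj_def gmul_def by auto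
qed

lemma conj_gmul:
  assumes \<sigma>: "\<sigma> \<in> ring_iso K K" and g2: "g2 \<in> carrier K \<rightarrow> carrier K"
  shows "conj K \<sigma> (gmul K g1 g2) = gmul K (conj K \<sigma> g1) (conj K \<sigma> g2)"
proof (rule extensionalityI[of _ "carrier K"])
  fix x assume x: "x \<in> carrier K"
  have \<sigma>x: "\<sigma> x \<in> carrier K" "g2 (\<sigma> x) \<in> carrier K"
    using x ring_iso_memE(1)[OF \<sigma>] g2 by auto
  then have conj_x: "conj K \<sigma> g2 x \<in> carrier K"
    using x ginv_apply(3)[OF \<sigma>] by (simp add: conj_apply)
  have "conj K \<sigma> (gmul K g1 g2) x = ginv K \<sigma> (g1 (g2 (\<sigma> x)))"
    using x \<sigma>x by (simp add: conj_apply gmul_def compose_def)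
  also have "\<dots> = ginv K \<sigma> (g1 (\<sigma> (conj K \<sigma> g2 x)))"
    using x \<sigma>x ginv_apply(2)[OF \<sigma>] by (simp add: conj_apply)
  also have "\<dots> = gmul K (conj K \<sigma> g1) (conj K \<sigma> g2) x"
    using x conj_x by (simp add: conj_apply gmul_def compose_def)
  finally show "conj K \<sigma> (gmul K g1 g2) x = gmul K (conj K \<sigma> g1) (conj K \<sigma> g2) x" .
qed (simp_all add: conj_def gmul_def)

lemma character_char_act:
  assumes \<sigma>: "\<sigma> \<in> ring_iso K K" and \<chi>: "character K (Gal K F) \<chi>"
    and closed: "\<forall>g\<in>Gal K F. conj K \<sigma> g \<in> Gal K F"
  shows "character K (Gal K F) (char_act K \<sigma> \<chi>)"
proof -
  obtain S where S: "finite S" "S \<subseteq> carrier K"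
    "\<forall>g\<in>Gal K F. \<forall>g'\<in>Gal K F. (\<forall>x\<in>S. g x = g' x) \<longrightarrow> \<chi> g = \<chi> g'"
    using \<chi> unfolding character_def cont1_def by blast
  have "cont1 K (Gal K F) (char_act K \<sigma> \<chi>)"
    unfolding cont1_def
  proof (intro exI[of _ "\<sigma> ` S"] conjI ballI impI)
    fix g g' assume g: "g \<in> Gal K F" "g' \<in> Gal K F" and eq: "\<forall>x\<in>\<sigma> ` S. g x = g' x"
    then have "\<forall>x\<in>S. conj K \<sigma> g x = conj K \<sigma> g' x" using S(2) by (auto simp: conj_apply)
    then show "char_act K \<sigma> \<chi> g = char_act K \<sigma> \<chi> g'"
      using S(3) closed g unfolding char_act_def by blast
  qed (use S ring_iso_memE(1)[OF \<sigma>] in auto)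
  then show ?thesis
    using \<chi> closed conj_gmul[OF \<sigma> Gal_funcset]
    unfolding character_def char_act_def by auto
qed

lemma s_uu_star_delta:
  assumes "\<sigma> \<in> ring_iso K K" "g2 \<in> carrier K \<rightarrow> carrier K"
  shows "s_uu_star K \<sigma> (delta K \<chi>) g1 g2 = - delta K (char_act K \<sigma> \<chi>) g1 g2"
  unfolding s_uu_star_def delta_def char_act_def conj_gmul[OF assms] ..

lemma cohomologous2_neg_delta:
  assumes \<chi>: "character K G \<chi>"
  shows "cohomologous2 K G (\<lambda>g1 g2. - delta K \<chi> g1 g2) (delta K (char_neg \<chi>))"
  unfolding cohomologous2_def
proof (intro exI[of _ "\<lambda>g. \<lfloor>- \<chi> g\<rfloor>"] conjI ballI)
  show "cont1 K G (\<lambda>g. \<lfloor>- \<chi> g\<rfloor>)"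
    using \<chi> unfolding character_def cont1_def by metis
  fix g1 g2 assume "g1 \<in> G" "g2 \<in> G"
  then have "\<chi> (gmul K g1 g2) = \<chi> g1 + \<chi> g2 - of_int \<lfloor>\<chi> g1 + \<chi> g2\<rfloor>"
    using \<chi> unfolding character_def frac_def by blast
  then have "\<chi> g2 - \<chi> (gmul K g1 g2) + \<chi> g1 \<in> \<int>" by simp
  then show "- delta K \<chi> g1 g2 - delta K (char_neg \<chi>) g1 g2
      = \<lfloor>- \<chi> g2\<rfloor> - \<lfloor>- \<chi> (gmul K g1 g2)\<rfloor> + \<lfloor>- \<chi> g1\<rfloor>"
    unfolding delta_def char_neg_def by (rule floor_frac_neg_coboundary)
qed

lemma cohomologous2_cong:
  assumes "cohomologous2 K G f h" "\<forall>g1\<in>G. \<forall>g2\<in>G. f' g1 g2 = f g1 g2"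
  shows "cohomologous2 K G f' h"
  using assms unfolding cohomologous2_def by auto

theorem proposition2:
  fixes K :: "'a ring" and k :: "'a set" and c d r :: 'a and \<sigma> :: "'a \<Rightarrow> 'a"
    and \<chi> :: "('a \<Rightarrow> 'a) \<Rightarrow> rat"
  assumes "algebraic_closure K k"
    and "algebraically_closed K"
    and "perfect_subfield K k"
    and "c \<in> k" "c \<noteq> \<zero>\<^bsub>K\<^esub>" "d \<in> k" "d \<noteq> \<zero>\<^bsub>K\<^esub>"
    and "\<not> quat_split K k c d"
    and "r \<in> carrier K" "r \<otimes>\<^bsub>K\<^esub> r = d"
    and "\<sigma> \<in> Gal K k" "\<sigma> r \<noteq> r"
    and "character K (Gal K (generate_field K (insert r k))) \<chi>"
  shows "cohomologous2 K (Gal K (generate_field K (insert r k)))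
           (s_uu_star K \<sigma> (delta K \<chi>))
           (delta K (char_neg (char_act K \<sigma> \<chi>)))"
proof -
  interpret algebraic_closure K k by (rule assms(1))
  let ?H = "insert r k"
  have k: "k \<subseteq> carrier K" using subfieldE(3)[OF subfield_axioms] .
  have \<sigma>: "\<sigma> \<in> ring_iso K K" "\<forall>x\<in>k. \<sigma> x = x" using assms(11) unfolding Gal_def by auto
  then have \<sigma>_hom: "\<sigma> \<in> ring_hom K K" by (simp add: ring_iso_def)
  have "\<sigma> r \<otimes>\<^bsub>K\<^esub> \<sigma> r = r \<otimes>\<^bsub>K\<^esub> r"
    using ring_hom_mult[OF \<sigma>_hom assms(9) assms(9)] assms(6,10) \<sigma>(2) by simp
  then have \<sigma>_r: "\<sigma> r = \<ominus>\<^bsub>K\<^esub> r"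
    using square_eq_squareD ring_hom_closed[OF \<sigma>_hom assms(9)] assms(9,12) by blast
  have "\<sigma> ` ?H \<subseteq> generate_field K ?H"
    using \<sigma>(2) \<sigma>_r by (auto intro: generate_field.incl generate_field.a_inv)
  moreover have "Gal K (generate_field K ?H) = Gal K ?H"
    using Gal_generate_field k assms(9) by simp
  ultimately have "\<forall>g\<in>Gal K (generate_field K ?H). conj K \<sigma> g \<in> Gal K (generate_field K ?H)"
    using conj_in_Gal[OF ring_axioms \<sigma>(1), of _ "generate_field K ?H" ?H] k assms(9) by auto
  then have "character K (Gal K (generate_field K ?H)) (char_act K \<sigma> \<chi>)"
    using character_char_act[OF \<sigma>(1) assms(13)] by blast
  then have "cohomologous2 K (Gal K (generate_field K ?H))
      (\<lambda>g1 g2. - delta K (char_act K \<sigma> \<chi>) g1 g2) (delta K (char_neg (char_act K \<sigma> \<chi>)))"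
    by (rule cohomologous2_neg_delta)
  then show ?thesis
    by (rule cohomologous2_cong) (use s_uu_star_delta[OF \<sigma>(1) Gal_funcset] in blast)
qed

end
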